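(* Let $N\ge 2$. There exists a lower triangular matrix $H\in\mathbb{R}^{(N-1)\times(N-1)}$ with entries $h_{k,j}$ such that for every $d\ge 1$, every nonexpansive $\mathbb{T}\colon\mathbb{R}^d\to\mathbb{R}^d$ and every $y_0\in\mathbb{R}^d$: (i) the iterates of the Optimal Halpern Method $y_{k+1}=\frac{k+1}{k+2}\mathbb{T}y_k+\frac{1}{k+2}y_0$, $k=0,\dots,N-2$, satisfy $y_{k+1}=y_k-\sum_{j=0}^k h_{k+1,j+1}(y_j-\mathbb{T}y_j)$ for $k=0,\dots,N-2$; and (ii) the iterates of the Dual Optimal Halpern Method $y_{k+1}=y_k+\frac{N-k-1}{N-k}(\mathbb{T}y_k-\mathbb{T}y_{k-1})$, $k=0,\dots,N-2$ (with $\mathbb{T}y_{-1}:=y_0$), satisfy $y_{k+1}=y_k-\sum_{j=0}^k (H^{A})_{k+1,j+1}(y_j-\mathbb{T}y_j)$ for $k=0,\dots,N-2$, where $H^{A}$ denotes the anti-diagonal transpose $(H^A)_{k,j}=H_{N-j,N-k}$. That is, the two methods are H-duals of each other.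
   Context: Nonexpansive means $1$-Lipschitz. Indices of $(N-1)\times(N-1)$ matrices run over $1,\dots,N-1$. *)

theory Defs
  imports Complex_Main
begin

text \<open>R^d is represented by functions nat => real vanishing at indices >= d
  (components 0..d-1); this lets d vary inside the statement.\<close>

definition vec_space :: "nat \<Rightarrow> (nat \<Rightarrow> real) set" where
  "vec_space d = {x. \<forall>i\<ge>d. x i = 0}"

definition edist :: "nat \<Rightarrow> (nat \<Rightarrow> real) \<Rightarrow> (nat \<Rightarrow> real) \<Rightarrow> real" where
  "edist d x y = sqrt (\<Sum>i<d. (x i - y i)^2)"

definition nonexpansive :: "nat \<Rightarrow> ((nat \<Rightarrow> real) \<Rightarrow> (nat \<Rightarrow> real)) \<Rightarrow> bool" where
  "nonexpansive d T \<longleftrightarrow>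
     (\<forall>x\<in>vec_space d. T x \<in> vec_space d) \<and>
     (\<forall>x\<in>vec_space d. \<forall>y\<in>vec_space d. edist d (T x) (T y) \<le> edist d x y)"

fun ohm :: "((nat \<Rightarrow> real) \<Rightarrow> (nat \<Rightarrow> real)) \<Rightarrow> (nat \<Rightarrow> real) \<Rightarrow> nat \<Rightarrow> (nat \<Rightarrow> real)" where
  "ohm T y0 0 = y0"
| "ohm T y0 (Suc k) =
     (\<lambda>i. (real k + 1) / (real k + 2) * T (ohm T y0 k) i + 1 / (real k + 2) * y0 i)"

fun dohm :: "nat \<Rightarrow> ((nat \<Rightarrow> real) \<Rightarrow> (nat \<Rightarrow> real)) \<Rightarrow> (nat \<Rightarrow> real) \<Rightarrow> nat \<Rightarrow> (nat \<Rightarrow> real)" where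
  "dohm N T y0 0 = y0"
| "dohm N T y0 (Suc 0) =
     (\<lambda>i. y0 i + (real N - 1) / real N * (T y0 i - y0 i))"
| "dohm N T y0 (Suc (Suc k)) =
     (\<lambda>i. dohm N T y0 (Suc k) i
          + (real N - real k - 2) / (real N - real k - 1)
            * (T (dohm N T y0 (Suc k)) i - T (dohm N T y0 k) i))"

end

theory Submission
  imports Defs
begin

text \<open>Both methods are linear recursions in the residuals \<open>g\<^sub>j = y\<^sub>j - T y\<^sub>j\<close>, and only
  algebra is involved: the identities hold for every map \<open>T\<close>, nonexpansive or not.
  For the Optimal Halpern Method, \<open>(k+1)(y\<^sub>0 - y\<^sub>k) = \<Sum>\<^sub>j\<^sub><\<^sub>k (j+1) g\<^sub>j\<close>, which turns the
  increment \<open>y\<^sub>k\<^sub>+\<^sub>1 - y\<^sub>k\<close> into a combination of \<open>g\<^sub>0, \<dots>, g\<^sub>k\<close> with the coefficients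
  \<open>H\<^sub>k\<^sub>,\<^sub>k = k/(k+1)\<close> and \<open>H\<^sub>k\<^sub>,\<^sub>j = -j/(k(k+1))\<close> for \<open>j < k\<close>.
  For the dual method, the gap \<open>E\<^sub>k = y\<^sub>k - T y\<^sub>k\<^sub>-\<^sub>1\<close> telescopes to
  \<open>E\<^sub>k/(N-k) = \<Sum>\<^sub>j\<^sub><\<^sub>k g\<^sub>j/((N-j)(N-j-1))\<close>, and the increment
  \<open>y\<^sub>k\<^sub>+\<^sub>1 - y\<^sub>k = (N-k-1)/(N-k) (E\<^sub>k - g\<^sub>k)\<close> then has exactly the anti-diagonally
  transposed coefficients.\<close>

definition halpern_H :: "nat \<Rightarrow> nat \<Rightarrow> real" where
  "halpern_H k j =
     (if j = k then real k / (real k + 1)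
      else if j < k then - real j / (real k * (real k + 1)) else 0)"

lemma halpern_H_upper_zero: "k < j \<Longrightarrow> halpern_H k j = 0"
  by (simp add: halpern_H_def)

lemma ohm_Suc_scaled:
  "(real k + 2) * ohm T y0 (Suc k) i = (real k + 1) * T (ohm T y0 k) i + y0 i"
  by (simp add: distrib_left)

lemma ohm_weighted_residual_sum:
  "(real k + 1) * (y0 i - ohm T y0 k i) =
     (\<Sum>j<k. (real j + 1) * (ohm T y0 j i - T (ohm T y0 j) i))"
proof (induction k)
  case 0
  show ?case by simp
next
  case (Suc k)
  have "(real (Suc k) + 1) * (y0 i - ohm T y0 (Suc k) i)
      = (real k + 2) * y0 i - (real k + 2) * ohm T y0 (Suc k) i"
    by (simp add: algebra_simps)
  also have "\<dots> = (real k + 1) * (y0 i - ohm T y0 k i)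
                 + (real k + 1) * (ohm T y0 k i - T (ohm T y0 k) i)"
    unfolding ohm_Suc_scaled by (simp add: algebra_simps)
  finally show ?case
    using Suc.IH by simp
qed

lemma ohm_H_step:
  "ohm T y0 (k + 1) i =
     ohm T y0 k i - (\<Sum>j\<le>k. halpern_H (k + 1) (j + 1) * (ohm T y0 j i - T (ohm T y0 j) i))"
proof -
  define g where "g j = ohm T y0 j i - T (ohm T y0 j) i" for j
  have pos: "real k + 2 > 0"
    by linarith
  have "halpern_H (k + 1) (j + 1) = - ((real j + 1) / ((real k + 1) * (real k + 2)))"
    if "j < k" for j
    using that by (simp add: halpern_H_def add.commute) (simp add: minus_divide_left)
  then have "(\<Sum>j<k. halpern_H (k + 1) (j + 1) * g j)
      = - ((\<Sum>j<k. (real j + 1) * g j) / ((real k + 1) * (real k + 2)))"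
    by (simp add: sum_divide_distrib flip: sum_negf)
  also have "\<dots> = - ((y0 i - ohm T y0 k i) / (real k + 2))"
    by (simp add: g_def flip: ohm_weighted_residual_sum)
  finally have lower: "(\<Sum>j<k. halpern_H (k + 1) (j + 1) * g j)
      = - ((y0 i - ohm T y0 k i) / (real k + 2))" .
  have diag: "halpern_H (k + 1) (k + 1) = (real k + 1) / (real k + 2)"
    by (simp add: halpern_H_def add.commute)
  have "ohm T y0 (k + 1) i = ((real k + 1) * T (ohm T y0 k) i + y0 i) / (real k + 2)"
    using ohm_Suc_scaled[of k T y0 i] pos by (simp add: field_simps)
  also have "\<dots> = ohm T y0 k i - (- ((y0 i - ohm T y0 k i) / (real k + 2))
                                   + (real k + 1) / (real k + 2) * g k)"
    using pos by (simp add: g_def divide_simps) (simp add: algebra_simps)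
  also have "\<dots> = ohm T y0 k i - ((\<Sum>j<k. halpern_H (k + 1) (j + 1) * g j)
                                   + halpern_H (k + 1) (k + 1) * g k)"
    unfolding lower diag ..
  also have "\<dots> = ohm T y0 k i - (\<Sum>j\<le>k. halpern_H (k + 1) (j + 1) * g j)"
    by (simp add: lessThan_Suc_atMost[symmetric])
  finally show ?thesis
    by (simp add: g_def)
qed

definition dohm_prev_T ::
    "nat \<Rightarrow> ((nat \<Rightarrow> real) \<Rightarrow> (nat \<Rightarrow> real)) \<Rightarrow> (nat \<Rightarrow> real) \<Rightarrow> nat \<Rightarrow> (nat \<Rightarrow> real)" where
  "dohm_prev_T N T y0 k = (case k of 0 \<Rightarrow> y0 | Suc j \<Rightarrow> T (dohm N T y0 j))"

lemma dohm_Suc_prev_T: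
  "dohm N T y0 (Suc k) i =
     dohm N T y0 k i + (real N - real k - 1) / (real N - real k)
       * (T (dohm N T y0 k) i - dohm_prev_T N T y0 k i)"
  by (cases k) (simp_all add: dohm_prev_T_def algebra_simps)

lemma divided_gap_recurrence:
  fixes a E g :: real
  assumes "a > 1"
  shows "(g + (a - 1) / a * (E - g)) / (a - 1) = E / a + g / (a * (a - 1))"
proof -
  have "a \<noteq> 0" "a - 1 \<noteq> 0"
    using assms by auto
  then show ?thesis
    by (simp add: field_simps)
qed

lemma dohm_gap_sum:
  assumes "k < N"
  shows "(dohm N T y0 k i - dohm_prev_T N T y0 k i) / (real N - real k) =
     (\<Sum>j<k. (dohm N T y0 j i - T (dohm N T y0 j) i) / ((real N - real j) * (real N - real j - 1)))"
  using assms
proof (induction k)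
  case 0
  show ?case by (simp add: dohm_prev_T_def)
next
  case (Suc k)
  define E where "E = dohm N T y0 k i - dohm_prev_T N T y0 k i"
  define g where "g = dohm N T y0 k i - T (dohm N T y0 k) i"
  have "dohm N T y0 (Suc k) i - dohm_prev_T N T y0 (Suc k) i
      = g + (real N - real k - 1) / (real N - real k) * (E - g)"
    by (simp add: dohm_Suc_prev_T dohm_prev_T_def E_def g_def algebra_simps)
  moreover have "real N - real (Suc k) = (real N - real k) - 1"
    by simp
  moreover have "real N - real k > 1"
    using Suc.prems by linarith
  ultimately have "(dohm N T y0 (Suc k) i - dohm_prev_T N T y0 (Suc k) i) / (real N - real (Suc k))
      = E / (real N - real k) + g / ((real N - real k) * (real N - real k - 1))"
    by (simp only: divided_gap_recurrence)
  then show ?case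
    using Suc by (simp add: E_def g_def)
qed

lemma dohm_H_step:
  assumes "k + 2 \<le> N"
  shows "dohm N T y0 (k + 1) i =
     dohm N T y0 k i - (\<Sum>j\<le>k. halpern_H (N - (j + 1)) (N - (k + 1))
       * (dohm N T y0 j i - T (dohm N T y0 j) i))"
proof -
  define g where "g j = dohm N T y0 j i - T (dohm N T y0 j) i" for j
  define E where "E = dohm N T y0 k i - dohm_prev_T N T y0 k i"
  define c where "c = (real N - real k - 1) / (real N - real k)"
  have "halpern_H (N - (j + 1)) (N - (k + 1)) * g j
      = - (real N - real k - 1) * (g j / ((real N - real j) * (real N - real j - 1)))"
    if "j < k" for j
  proof -
    have "N - (k + 1) < N - (j + 1)"
      using that assms by linarith
    moreover have "real (N - (j + 1)) = real N - real j - 1" "real (N - (k + 1)) = real N - real k - 1"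
      using that assms by (simp_all add: of_nat_diff)
    ultimately show ?thesis
      by (simp add: halpern_H_def field_simps)
  qed
  then have "(\<Sum>j<k. halpern_H (N - (j + 1)) (N - (k + 1)) * g j)
      = - (real N - real k - 1) * (E / (real N - real k))"
    using dohm_gap_sum[of k N T y0 i] assms
    by (simp add: sum_distrib_left E_def g_def flip: sum_negf)
  then have lower: "(\<Sum>j<k. halpern_H (N - (j + 1)) (N - (k + 1)) * g j) = - c * E"
    unfolding c_def by (simp only: mult_minus_left times_divide_eq_left times_divide_eq_right)
  have diag: "halpern_H (N - (k + 1)) (N - (k + 1)) = c"
    using assms by (simp add: halpern_H_def of_nat_diff c_def)
  have "(\<Sum>j\<le>k. halpern_H (N - (j + 1)) (N - (k + 1)) * g j)
      = (\<Sum>j<k. halpern_H (N - (j + 1)) (N - (k + 1)) * g j)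
        + halpern_H (N - (k + 1)) (N - (k + 1)) * g k"
    by (simp add: lessThan_Suc_atMost[symmetric])
  also have "\<dots> = - c * (E - g k)"
    unfolding lower diag by (simp add: algebra_simps)
  finally have sum: "(\<Sum>j\<le>k. halpern_H (N - (j + 1)) (N - (k + 1)) * g j) = - c * (E - g k)" .
  have "dohm N T y0 (k + 1) i = dohm N T y0 k i + c * (T (dohm N T y0 k) i - dohm_prev_T N T y0 k i)"
    unfolding c_def by (simp add: dohm_Suc_prev_T)
  also have "\<dots> = dohm N T y0 k i - - c * (E - g k)"
    by (simp add: E_def g_def)
  also have "\<dots> = dohm N T y0 k i - (\<Sum>j\<le>k. halpern_H (N - (j + 1)) (N - (k + 1)) * g j)"
    by (simp only: sum)
  finally show ?thesis
    by (simp only: g_def)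
qed

theorem proposition5p1:
  fixes N :: nat
  assumes "N \<ge> 2"
  shows "\<exists>H :: nat \<Rightarrow> nat \<Rightarrow> real.
    (\<forall>k j. 1 \<le> k \<and> k < j \<and> j \<le> N - 1 \<longrightarrow> H k j = 0) \<and>
    (\<forall>d :: nat. \<forall>T y0. d \<ge> 1 \<and> nonexpansive d T \<and> y0 \<in> vec_space d \<longrightarrow>
       (\<forall>k \<le> N - 2. ohm T y0 (k + 1) =
          (\<lambda>i. ohm T y0 k i - (\<Sum>j\<le>k. H (k + 1) (j + 1) * (ohm T y0 j i - T (ohm T y0 j) i)))) \<and>
       (\<forall>k \<le> N - 2. dohm N T y0 (k + 1) =
          (\<lambda>i. dohm N T y0 k i - (\<Sum>j\<le>k. H (N - (j + 1)) (N - (k + 1))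
                 * (dohm N T y0 j i - T (dohm N T y0 j) i)))))"
proof (intro exI[of _ halpern_H] conjI allI impI ext)
  show "halpern_H k j = 0" if "1 \<le> k \<and> k < j \<and> j \<le> N - 1" for k j
    using that by (simp add: halpern_H_upper_zero)
  show "ohm T y0 (k + 1) i =
      ohm T y0 k i - (\<Sum>j\<le>k. halpern_H (k + 1) (j + 1) * (ohm T y0 j i - T (ohm T y0 j) i))"
    for T y0 k i
    by (rule ohm_H_step)
  show "dohm N T y0 (k + 1) i =
      dohm N T y0 k i - (\<Sum>j\<le>k. halpern_H (N - (j + 1)) (N - (k + 1))
        * (dohm N T y0 j i - T (dohm N T y0 j) i))"
    if "k \<le> N - 2" for T y0 k i
    using that assms by (intro dohm_H_step) linarith
qed

end
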